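(* Let $(P,\leq,{}',0,1)$ be a generalized orthomodular poset and define $R(x,y):=LU(x',y)$ for all $x,y\in P$. Then $(P,\leq,{}',R,0,1)$ is a conditionally operator residuated poset satisfying operator divisibility. Explicitly, for all $x,y,z\in P$: (i) if $x'\leq y$ and $L(x,y)\subseteq L(z)$ then $L(x)\subseteq R(y,z)$; (ii) if $z\leq y$ and $L(x)\subseteq R(y,z)$ then $L(x,y)\subseteq L(z)$; (iii) $R(x,0)=L(x')$; (iv) $R(x'',x)=P$; and moreover $x\leq y$ implies $L(y,U(R(y,x)))=L(x)$.
   Context: For a poset $(P,\leq)$ and $A\subseteq P$: $L(A):=\{x\in P\mid x\leq a\text{ for all }a\in A\}$, $U(A):=\{x\in P\mid a\leq x\text{ for all }a\in A\}$. We write $L(a,b)$ for $L(\{a,b\})$, $L(a,B)$ for $L(\{a\}\cup B)$, $LU(A)$ for $L(U(A))$, $ULU(A)=U(L(U(A)))$, etc.; for $A\subseteq P$, $A':=\{x'\mid x\in A\}$. An orthoposet is a bounded poset $(P,\leq,{}',0,1)$ with a unary operation $'$ that is an antitone involution ($x''=x$, and $x\leq y\Rightarrow y'\leq x'$) and a complementation ($L(x,x')=\{0\}$, $U(x,x')=\{1\}$). A generalized orthomodular poset is an orthoposet satisfying: for all $x,y\in P$, $x\leq y$ implies $U(y)=U(x,L(x',y))$. A conditionally operator residuated poset is a tuple $(P,\leq,{}',R,0,1)$ where $(P,\leq,0,1)$ is a bounded poset, $'$ is an antitone unary operation, and $R:P^2\to 2^P$ satisfies (i)–(iv) above; it satisfies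 operator divisibility if $x\leq y$ implies $L(y,U(R(y,x)))=L(x)$. *)

theory Defs
  imports Main
begin

text \<open>Posets are modelled as types of class order; the whole type is the carrier P.\<close>

definition Lo :: "'a::order set \<Rightarrow> 'a set" where
  "Lo A = {x. \<forall>a\<in>A. x \<le> a}"

definition Uo :: "'a::order set \<Rightarrow> 'a set" where
  "Uo A = {x. \<forall>a\<in>A. a \<le> x}"

definition bounded_poset :: "'a::order \<Rightarrow> 'a \<Rightarrow> bool" where
  "bounded_poset z o1 \<longleftrightarrow> (\<forall>x. z \<le> x \<and> x \<le> o1)"

definition orthoposet :: "('a::order \<Rightarrow> 'a) \<Rightarrow> 'a \<Rightarrow> 'a \<Rightarrow> bool" where
  "orthoposet c z o1 \<longleftrightarrow> bounded_poset z o1 \<and>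
     (\<forall>x. c (c x) = x) \<and> (\<forall>x y. x \<le> y \<longrightarrow> c y \<le> c x) \<and>
     (\<forall>x. Lo {x, c x} = {z} \<and> Uo {x, c x} = {o1})"

definition generalized_orthomodular_poset :: "('a::order \<Rightarrow> 'a) \<Rightarrow> 'a \<Rightarrow> 'a \<Rightarrow> bool" where
  "generalized_orthomodular_poset c z o1 \<longleftrightarrow> orthoposet c z o1 \<and>
     (\<forall>x y. x \<le> y \<longrightarrow> Uo {y} = Uo ({x} \<union> Lo {c x, y}))"

definition cond_operator_residuated_poset ::
  "('a::order \<Rightarrow> 'a) \<Rightarrow> ('a \<Rightarrow> 'a \<Rightarrow> 'a set) \<Rightarrow> 'a \<Rightarrow> 'a \<Rightarrow> bool" where
  "cond_operator_residuated_poset c R z o1 \<longleftrightarrow> bounded_poset z o1 \<and>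
     (\<forall>x y. x \<le> y \<longrightarrow> c y \<le> c x) \<and>
     (\<forall>x y w. c x \<le> y \<and> Lo {x, y} \<subseteq> Lo {w} \<longrightarrow> Lo {x} \<subseteq> R y w) \<and>
     (\<forall>x y w. w \<le> y \<and> Lo {x} \<subseteq> R y w \<longrightarrow> Lo {x, y} \<subseteq> Lo {w}) \<and>
     (\<forall>x. R x z = Lo {c x}) \<and>
     (\<forall>x. R (c (c x)) x = UNIV)"

definition operator_divisibility ::
  "('a::order \<Rightarrow> 'a \<Rightarrow> 'a set) \<Rightarrow> bool" where
  "operator_divisibility R \<longleftrightarrow>
     (\<forall>x y. x \<le> y \<longrightarrow> Lo ({y} \<union> Uo (R y x)) = Lo {x})"

end

theory Submission
  imports Defs
begin

text \<open>The generalized orthomodular law is self-dual: transporting it along the antitone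
involution \<open>'\<close> gives \<open>L(x) = L(y, U(y', x))\<close> for \<open>x \<le> y\<close>. Since \<open>ULU = U\<close>, this is exactly
operator divisibility for \<open>R(y, x) = LU(y', x)\<close>, and it also yields the implication (ii)
of the residuation. The converse implication (i) comes from the law itself applied to
\<open>y' \<le> x\<close>; (iii) and (iv) only use that \<open>0\<close> is the bottom and \<open>U(x, x') = {1}\<close>.\<close>

lemma Uo_Lo_Uo: "Uo (Lo (Uo A)) = Uo A"
  unfolding Lo_def Uo_def by auto

lemma Lo_Uo_singleton: "Lo (Uo {a}) = Lo {a}"
  unfolding Lo_def Uo_def by auto

lemma Lo_Un: "Lo (A \<union> B) = Lo A \<inter> Lo B"
  unfolding Lo_def by auto

lemma image_Lo_antitone_involution:
  assumes inv: "\<And>a. c (c a) = a" and anti: "\<And>a b. a \<le> b \<Longrightarrow> c b \<le> c a"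
  shows "c ` Lo A = Uo (c ` A)"
proof -
  have le_iff: "c a \<le> b \<longleftrightarrow> c b \<le> a" for a b
    by (metis anti inv)
  have "x \<in> c ` Lo A \<longleftrightarrow> x \<in> Uo (c ` A)" for x
    using inv le_iff[of _ x] by (auto simp: Lo_def Uo_def image_iff)
  thus ?thesis by blast
qed

lemma image_Uo_antitone_involution:
  assumes inv: "\<And>a. c (c a) = a" and anti: "\<And>a b. a \<le> b \<Longrightarrow> c b \<le> c a"
  shows "c ` Uo A = Lo (c ` A)"
proof -
  have "c ` Lo (c ` A) = Uo A"
    using image_Lo_antitone_involution[OF inv anti, of "c ` A"] inv
    by (simp add: image_comp comp_def)
  hence "c ` c ` Lo (c ` A) = c ` Uo A" by simp
  thus ?thesis using inv by (simp add: image_comp comp_def)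
qed

lemma gomp_orthoposet:
  "generalized_orthomodular_poset c z o1 \<Longrightarrow> orthoposet c z o1"
  unfolding generalized_orthomodular_poset_def by (rule conjunct1)

lemma gomp_bounded:
  assumes "generalized_orthomodular_poset c z o1"
  shows "bounded_poset z o1"
  using gomp_orthoposet[OF assms] unfolding orthoposet_def by (rule conjunct1)

lemma gomp_involution:
  assumes "generalized_orthomodular_poset c z o1"
  shows "c (c a) = a"
  using gomp_orthoposet[OF assms] unfolding orthoposet_def by simp

lemma gomp_antitone:
  assumes "generalized_orthomodular_poset c z o1" and "a \<le> b"
  shows "c b \<le> c a"
  using gomp_orthoposet[OF assms(1)] assms(2) unfolding orthoposet_def by simp

lemma gomp_complement_join:
  assumes "generalized_orthomodular_poset c z o1"
  shows "Uo {a, c a} = {o1}"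
  using gomp_orthoposet[OF assms] unfolding orthoposet_def by simp

lemma gomp_law:
  assumes "generalized_orthomodular_poset c z o1" and "x \<le> y"
  shows "Uo {y} = Uo ({x} \<union> Lo {c x, y})"
  using assms unfolding generalized_orthomodular_poset_def by blast

lemma gomp_law_dual:
  assumes g: "generalized_orthomodular_poset c z o1" and "x \<le> y"
  shows "Lo {x} = Lo ({y} \<union> Uo {c y, x})"
proof -
  note inv = gomp_involution[OF g] and anti = gomp_antitone[OF g]
  have "Uo {c x} = Uo ({c y} \<union> Lo {y, c x})"
    using gomp_law[OF g anti[OF \<open>x \<le> y\<close>]] by (simp add: inv)
  hence "c ` Uo {c x} = c ` Uo ({c y} \<union> Lo {y, c x})" by simp
  also have "c ` Uo ({c y} \<union> Lo {y, c x}) = Lo ({y} \<union> c ` Lo {y, c x})"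
    by (simp add: image_Uo_antitone_involution[OF inv anti] inv)
  also have "c ` Lo {y, c x} = Uo {c y, x}"
    by (simp add: image_Lo_antitone_involution[OF inv anti] inv)
  finally show ?thesis
    by (simp add: image_Uo_antitone_involution[OF inv anti] inv)
qed

lemma gomp_operator_divisibility:
  assumes "generalized_orthomodular_poset c z o1" and "x \<le> y"
  shows "Lo ({y} \<union> Uo (Lo (Uo {c y, x}))) = Lo {x}"
  using gomp_law_dual[OF assms] by (simp add: Uo_Lo_Uo)

lemma gomp_residuation_intro:
  assumes g: "generalized_orthomodular_poset c z o1"
    and "c x \<le> y" and meet: "Lo {x, y} \<subseteq> Lo {w}"
  shows "Lo {x} \<subseteq> Lo (Uo {c y, w})"
proof -
  have "c y \<le> x"
    using gomp_antitone[OF g \<open>c x \<le> y\<close>] by (simp add: gomp_involution[OF g])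
  hence U_x: "Uo {x} = Uo ({c y} \<union> Lo {y, x})"
    using gomp_law[OF g] by (simp add: gomp_involution[OF g])
  have "Uo {c y, w} \<subseteq> Uo ({c y} \<union> Lo {y, x})"
  proof
    fix u assume u: "u \<in> Uo {c y, w}"
    have "s \<le> u" if "s \<in> Lo {y, x}" for s
    proof -
      have "s \<le> w" using that meet by (auto simp: Lo_def)
      thus ?thesis using u by (auto simp: Uo_def intro: order_trans)
    qed
    thus "u \<in> Uo ({c y} \<union> Lo {y, x})" using u by (auto simp: Uo_def)
  qed
  hence "Uo {c y, w} \<subseteq> Uo {x}" by (simp add: U_x)
  thus ?thesis by (auto simp: Lo_def Uo_def)
qed

lemma gomp_residuation_elim:
  assumes g: "generalized_orthomodular_poset c z o1"
    and "w \<le> y" and le_R: "Lo {x} \<subseteq> Lo (Uo {c y, w})"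
  shows "Lo {x, y} \<subseteq> Lo {w}"
proof
  fix t assume "t \<in> Lo {x, y}"
  hence "t \<in> Lo {x}" and "t \<le> y" by (auto simp: Lo_def)
  hence "t \<in> Lo {y} \<inter> Lo (Uo {c y, w})"
    using le_R by (auto simp: Lo_def)
  hence "t \<in> Lo ({y} \<union> Uo {c y, w})"
    unfolding Lo_Un by blast
  thus "t \<in> Lo {w}" by (simp add: gomp_law_dual[OF g \<open>w \<le> y\<close>])
qed

lemma gomp_residuum_bot:
  assumes "generalized_orthomodular_poset c z o1"
  shows "Lo (Uo {c x, z}) = Lo {c x}"
proof -
  have "\<And>a. z \<le> a"
    using gomp_bounded[OF assms] unfolding bounded_poset_def by blast
  hence "Uo {c x, z} = Uo {c x}" by (auto simp: Uo_def)
  thus ?thesis by (simp add: Lo_Uo_singleton)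
qed

lemma gomp_residuum_top:
  assumes g: "generalized_orthomodular_poset c z o1"
  shows "Lo (Uo {c (c (c x)), x}) = UNIV"
proof -
  have "Uo {x, c x} = {o1}" and "\<And>a. a \<le> o1"
    using gomp_complement_join[OF g] gomp_bounded[OF g] unfolding bounded_poset_def by blast+
  moreover have "{c (c (c x)), x} = {x, c x}"
    by (auto simp: gomp_involution[OF g])
  ultimately show ?thesis by (auto simp: Lo_def)
qed

theorem mainTheorem1:
  fixes c :: "'a::order \<Rightarrow> 'a" and z o1 :: 'a
  assumes "generalized_orthomodular_poset c z o1"
  shows "cond_operator_residuated_poset c (\<lambda>x y. Lo (Uo {c x, y})) z o1
         \<and> operator_divisibility (\<lambda>x y. Lo (Uo {c x, y}))"
  unfolding cond_operator_residuated_poset_def operator_divisibility_def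
  using gomp_bounded[OF assms] gomp_antitone[OF assms] gomp_residuation_intro[OF assms]
    gomp_residuation_elim[OF assms] gomp_residuum_bot[OF assms]
    gomp_residuum_top[OF assms] gomp_operator_divisibility[OF assms]
  by blast

end
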